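(* Let $H$ be an undirected graph and let $I$ be an induced minor of $H$. Then $\mathrm{dtw}(I)\le\mathrm{dtw}(H)$.
   Context: A graph $I$ is an induced minor of $H$ if it can be obtained from $H$ by deleting vertices and contracting edges. For a DAG $\vec H$, a source is a vertex of in-degree $0$; $S$ denotes the set of sources; $R(s)$ is the set of vertices reachable from $s$, and $R(B)=\bigcup_{s\in B}R(s)$. A DAG tree decomposition of $\vec H$ is a tree $T$ whose nodes (bags) are subsets of $S$ such that every source lies in some bag and, for any bags $B,B_1,B_2$ with $B$ on the path between $B_1$ and $B_2$ in $T$, $R(B_1)\cap R(B_2)\subseteq R(B)$; its width is the maximum bag size and $\mathrm{dtw}(\vec H)$ is the minimum width. For an undirected graph, $\mathrm{dtw}$ is the maximum of $\mathrm{dtw}(\vec H)$ over all its acyclic orientations $\vec H$. *)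

theory Defs
  imports Main
begin

definition is_graph :: "'a set \<Rightarrow> ('a \<Rightarrow> 'a \<Rightarrow> bool) \<Rightarrow> bool" where
  "is_graph V E \<longleftrightarrow> finite V \<and> (\<forall>x y. E x y \<longrightarrow> x \<in> V \<and> y \<in> V \<and> x \<noteq> y \<and> E y x)"

definition delete_vertex ::
  "'a set \<times> ('a \<Rightarrow> 'a \<Rightarrow> bool) \<Rightarrow> 'a \<Rightarrow> 'a set \<times> ('a \<Rightarrow> 'a \<Rightarrow> bool)" where
  "delete_vertex G v = (fst G - {v}, \<lambda>x y. snd G x y \<and> x \<noteq> v \<and> y \<noteq> v)"

definition contract_edge ::
  "'a set \<times> ('a \<Rightarrow> 'a \<Rightarrow> bool) \<Rightarrow> 'a \<Rightarrow> 'a \<Rightarrow> 'a set \<times> ('a \<Rightarrow> 'a \<Rightarrow> bool)" where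
  "contract_edge G u v = (fst G - {v},
     \<lambda>x y. x \<noteq> v \<and> y \<noteq> v \<and> x \<noteq> y \<and>
           (snd G x y \<or> (x = u \<and> snd G v y) \<or> (y = u \<and> snd G v x)))"

inductive obtainable ::
  "'a set \<times> ('a \<Rightarrow> 'a \<Rightarrow> bool) \<Rightarrow> 'a set \<times> ('a \<Rightarrow> 'a \<Rightarrow> bool) \<Rightarrow> bool" for H where
  obt_refl: "obtainable H H"
| obt_delete: "obtainable H G \<Longrightarrow> v \<in> fst G \<Longrightarrow> obtainable H (delete_vertex G v)"
| obt_contract: "obtainable H G \<Longrightarrow> snd G u v \<Longrightarrow> obtainable H (contract_edge G u v)"

definition graph_iso :: "'b set \<Rightarrow> ('b \<Rightarrow> 'b \<Rightarrow> bool) \<Rightarrow> 'a set \<Rightarrow> ('a \<Rightarrow> 'a \<Rightarrow> bool) \<Rightarrow> bool" where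
  "graph_iso V1 E1 V2 E2 \<longleftrightarrow>
     (\<exists>f. bij_betw f V1 V2 \<and> (\<forall>x\<in>V1. \<forall>y\<in>V1. E1 x y \<longleftrightarrow> E2 (f x) (f y)))"

definition induced_minor ::
  "'b set \<Rightarrow> ('b \<Rightarrow> 'b \<Rightarrow> bool) \<Rightarrow> 'a set \<Rightarrow> ('a \<Rightarrow> 'a \<Rightarrow> bool) \<Rightarrow> bool" where
  "induced_minor VI EI VH EH \<longleftrightarrow>
     (\<exists>G. obtainable (VH, EH) G \<and> graph_iso VI EI (fst G) (snd G))"

definition acyclic_orientation :: "'a set \<Rightarrow> ('a \<Rightarrow> 'a \<Rightarrow> bool) \<Rightarrow> ('a \<Rightarrow> 'a \<Rightarrow> bool) \<Rightarrow> bool" where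
  "acyclic_orientation V E D \<longleftrightarrow>
     (\<forall>x y. D x y \<longrightarrow> E x y) \<and>
     (\<forall>x y. E x y \<longrightarrow> D x y \<or> D y x) \<and>
     (\<forall>x y. \<not> (D x y \<and> D y x)) \<and>
     (\<forall>x. \<not> D\<^sup>+\<^sup>+ x x)"

definition sources :: "'a set \<Rightarrow> ('a \<Rightarrow> 'a \<Rightarrow> bool) \<Rightarrow> 'a set" where
  "sources V D = {s \<in> V. \<forall>x. \<not> D x s}"

definition reach :: "('a \<Rightarrow> 'a \<Rightarrow> bool) \<Rightarrow> 'a \<Rightarrow> 'a set" where
  "reach D s = {v. D\<^sup>*\<^sup>* s v}"

definition reach_set :: "('a \<Rightarrow> 'a \<Rightarrow> bool) \<Rightarrow> 'a set \<Rightarrow> 'a set" where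
  "reach_set D B = (\<Union>s\<in>B. reach D s)"

definition is_tpath :: "'n set \<Rightarrow> ('n \<Rightarrow> 'n \<Rightarrow> bool) \<Rightarrow> 'n list \<Rightarrow> 'n \<Rightarrow> 'n \<Rightarrow> bool" where
  "is_tpath N TE p x y \<longleftrightarrow> p \<noteq> [] \<and> hd p = x \<and> last p = y \<and> distinct p \<and> set p \<subseteq> N \<and>
     (\<forall>i. Suc i < length p \<longrightarrow> TE (p ! i) (p ! Suc i))"

definition is_tree :: "'n set \<Rightarrow> ('n \<Rightarrow> 'n \<Rightarrow> bool) \<Rightarrow> bool" where
  "is_tree N TE \<longleftrightarrow> is_graph N TE \<and> N \<noteq> {} \<and>
     (\<forall>x\<in>N. \<forall>y\<in>N. \<exists>!p. is_tpath N TE p x y)"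

definition on_tpath :: "'n set \<Rightarrow> ('n \<Rightarrow> 'n \<Rightarrow> bool) \<Rightarrow> 'n \<Rightarrow> 'n \<Rightarrow> 'n \<Rightarrow> bool" where
  "on_tpath N TE t t1 t2 \<longleftrightarrow> (\<exists>p. is_tpath N TE p t1 t2 \<and> t \<in> set p)"

definition dag_tree_decomp ::
  "'a set \<Rightarrow> ('a \<Rightarrow> 'a \<Rightarrow> bool) \<Rightarrow> nat set \<Rightarrow> (nat \<Rightarrow> nat \<Rightarrow> bool) \<Rightarrow> (nat \<Rightarrow> 'a set) \<Rightarrow> bool" where
  "dag_tree_decomp V D N TE bag \<longleftrightarrow>
     is_tree N TE \<and>
     (\<forall>t\<in>N. bag t \<subseteq> sources V D) \<and>
     (\<forall>s\<in>sources V D. \<exists>t\<in>N. s \<in> bag t) \<and>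
     (\<forall>t\<in>N. \<forall>t1\<in>N. \<forall>t2\<in>N. on_tpath N TE t t1 t2 \<longrightarrow>
        reach_set D (bag t1) \<inter> reach_set D (bag t2) \<subseteq> reach_set D (bag t))"

definition dtd_width :: "nat set \<Rightarrow> (nat \<Rightarrow> 'a set) \<Rightarrow> nat" where
  "dtd_width N bag = Max ((\<lambda>t. card (bag t)) ` N)"

definition dag_dtw :: "'a set \<Rightarrow> ('a \<Rightarrow> 'a \<Rightarrow> bool) \<Rightarrow> nat" where
  "dag_dtw V D = (LEAST k. \<exists>N TE bag. dag_tree_decomp V D N TE bag \<and> dtd_width N bag = k)"

definition graph_dtw :: "'a set \<Rightarrow> ('a \<Rightarrow> 'a \<Rightarrow> bool) \<Rightarrow> nat" where
  "graph_dtw V E = Max {dag_dtw V D | D. acyclic_orientation V E D}"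

end

theory Submission
  imports Defs
begin

text \<open>
  Each step towards an induced minor (deleting a vertex, contracting an edge, renaming
  vertices) is handled by lifting every acyclic orientation \<open>D'\<close> of the smaller graph to an
  acyclic orientation \<open>D\<close> of the larger one with \<open>dtw(D') \<le> dtw(D)\<close>: a deleted vertex becomes a
  sink, and a contracted edge \<open>uv\<close> is re-inserted with the orientation of the merged vertex
  inherited by its two ends. In each case the sources of \<open>D'\<close> are images of sources of \<open>D\<close>,
  and the sources whose image reaches a vertex \<open>x\<close> of \<open>D'\<close> are exactly those reaching one
  vertex of \<open>D\<close>, or one of two vertices with a common source. In a DAG tree decomposition of
  \<open>D\<close> the nodes whose bags reach a fixed vertex form a subtree, and two subtrees that share a
  node have a subtree as union; hence mapping the bags of an optimal decomposition of \<open>D\<close>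
  gives a decomposition of \<open>D'\<close> of no larger width.
\<close>

section \<open>Paths in trees\<close>

lemma is_tpath_ConsD:
  assumes "is_tpath N TE (a # c # r) x y"
  shows "x = a \<and> a \<in> N \<and> TE a c \<and> is_tpath N TE (c # r) c y"
proof -
  have "TE ((c # r) ! i) ((c # r) ! Suc i)" if "Suc i < length (c # r)" for i
    using assms that unfolding is_tpath_def by (metis Suc_less_eq length_Cons nth_Cons_Suc)
  moreover have "TE a c" using assms unfolding is_tpath_def by fastforce
  ultimately show ?thesis using assms unfolding is_tpath_def by auto
qed

lemma rtranclp_within_if_tpath:
  "is_tpath N TE p a b \<Longrightarrow> set p \<subseteq> M \<Longrightarrow> (\<lambda>x y. TE x y \<and> x \<in> M \<and> y \<in> M)\<^sup>*\<^sup>* a b"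
proof (induction p arbitrary: a)
  case Nil
  then show ?case by (simp add: is_tpath_def)
next
  case (Cons c p)
  show ?case
  proof (cases p)
    case Nil
    then show ?thesis using Cons.prems by (auto simp: is_tpath_def)
  next
    case (Cons d r)
    with Cons.prems have "a = c" "TE c d" "is_tpath N TE p d b" "c \<in> M" "d \<in> M" "set p \<subseteq> M"
      using is_tpath_ConsD by fastforce+
    then show ?thesis using Cons.IH by (simp add: converse_rtranclp_into_rtranclp)
  qed
qed

lemma is_tpath_snoc:
  assumes "is_tpath N TE p a y" "TE y z" "z \<in> N" "z \<notin> set p"
  shows "is_tpath N TE (p @ [z]) a z"
  unfolding is_tpath_def
proof (intro conjI allI impI)
  fix i assume i: "Suc i < length (p @ [z])"
  show "TE ((p @ [z]) ! i) ((p @ [z]) ! Suc i)"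
  proof (cases "Suc i < length p")
    case True
    then show ?thesis using assms(1) by (simp add: is_tpath_def nth_append)
  next
    case False
    with i have "i = length p - 1" "Suc i = length p" by simp_all
    moreover have "p \<noteq> []" "last p = y" using assms(1) by (simp_all add: is_tpath_def)
    ultimately show ?thesis using assms(2) by (simp add: nth_append last_conv_nth)
  qed
qed (use assms in \<open>auto simp: is_tpath_def\<close>)

lemma is_tpath_take:
  assumes "is_tpath N TE p a y" "i < length p"
  shows "is_tpath N TE (take (Suc i) p) a (p ! i)"
  using assms set_take_subset[of "Suc i" p] last_conv_nth[of "take (Suc i) p"]
  unfolding is_tpath_def by auto

lemma tpath_within_if_rtranclp:
  assumes "(\<lambda>x y. TE x y \<and> x \<in> M \<and> y \<in> M)\<^sup>*\<^sup>* a b" "a \<in> M" "M \<subseteq> N"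
  shows "\<exists>p. is_tpath N TE p a b \<and> set p \<subseteq> M"
  using assms(1)
proof (induction rule: rtranclp_induct)
  case base
  then show ?case using assms(2,3) by (intro exI[of _ "[a]"]) (auto simp: is_tpath_def)
next
  case (step y z)
  then obtain p where p: "is_tpath N TE p a y" "set p \<subseteq> M" by blast
  show ?case
  proof (cases "z \<in> set p")
    case True
    then obtain i where "i < length p" "p ! i = z" by (metis in_set_conv_nth)
    then show ?thesis using p is_tpath_take set_take_subset by fastforce
  next
    case False
    have "is_tpath N TE (p @ [z]) a z"
      using is_tpath_snoc[OF p(1)] step.hyps(2) assms(3) False by blast
    then show ?thesis using p(2) step.hyps(2) by (intro exI[of _ "p @ [z]"]) simp
  qed
qed

lemma is_tree_tpath_exists:
  "is_tree N TE \<Longrightarrow> x \<in> N \<Longrightarrow> y \<in> N \<Longrightarrow> \<exists>p. is_tpath N TE p x y"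
  unfolding is_tree_def by blast

lemma is_tree_tpath_unique:
  "is_tree N TE \<Longrightarrow> is_tpath N TE p x y \<Longrightarrow> is_tpath N TE q x y \<Longrightarrow> p = q"
  unfolding is_tree_def is_tpath_def by (metis subsetD hd_in_set last_in_set)

lemma on_tpath_split:
  assumes tree: "is_tree N TE" and "t1 \<in> N" "t2 \<in> N" "t0 \<in> N"
    and "on_tpath N TE t t1 t2"
  shows "on_tpath N TE t t1 t0 \<or> on_tpath N TE t t0 t2"
proof (rule ccontr)
  assume avoid: "\<not> ?thesis"
  let ?M = "N - {t}"
  obtain p1 p2 where p1: "is_tpath N TE p1 t1 t0" and p2: "is_tpath N TE p2 t0 t2"
    using is_tree_tpath_exists[OF tree] assms(2-4) by metis
  have M1: "set p1 \<subseteq> ?M" and M2: "set p2 \<subseteq> ?M"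
    using avoid p1 p2 unfolding on_tpath_def is_tpath_def by auto
  have "(\<lambda>x y. TE x y \<and> x \<in> ?M \<and> y \<in> ?M)\<^sup>*\<^sup>* t1 t2"
    using rtranclp_within_if_tpath[OF p1 M1] rtranclp_within_if_tpath[OF p2 M2] by simp
  moreover have "t1 \<in> ?M"
    using p1 M1 hd_in_set unfolding is_tpath_def by blast
  ultimately obtain q where q: "is_tpath N TE q t1 t2" "t \<notin> set q"
    using tpath_within_if_rtranclp[of TE ?M t1 t2 N] by blast
  obtain p where "is_tpath N TE p t1 t2" "t \<in> set p"
    using assms(5) unfolding on_tpath_def by blast
  with q show False using is_tree_tpath_unique[OF tree] by blast
qed

definition tree_convex :: "'n set \<Rightarrow> ('n \<Rightarrow> 'n \<Rightarrow> bool) \<Rightarrow> 'n set \<Rightarrow> bool" where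
  "tree_convex N TE A \<longleftrightarrow> (\<forall>t\<in>N. \<forall>t1\<in>A. \<forall>t2\<in>A. on_tpath N TE t t1 t2 \<longrightarrow> t \<in> A)"

lemma tree_convex_empty: "tree_convex N TE {}"
  unfolding tree_convex_def by blast

lemma tree_convex_Un:
  assumes "is_tree N TE" "A \<subseteq> N" "B \<subseteq> N" "tree_convex N TE A" "tree_convex N TE B" "A \<inter> B \<noteq> {}"
  shows "tree_convex N TE (A \<union> B)"
  unfolding tree_convex_def
proof (intro ballI impI)
  fix t t1 t2 assume t: "t \<in> N" "t1 \<in> A \<union> B" "t2 \<in> A \<union> B" "on_tpath N TE t t1 t2"
  obtain t0 where t0: "t0 \<in> A" "t0 \<in> B" using assms(6) by blast
  have "on_tpath N TE t t1 t0 \<or> on_tpath N TE t t0 t2"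
    using on_tpath_split[OF assms(1) _ _ _ t(4)] t t0 assms(2,3) by blast
  then show "t \<in> A \<union> B"
    using assms(4,5) t t0 unfolding tree_convex_def by blast
qed

section \<open>DAG tree decompositions\<close>

lemma is_tree_singleton: "is_tree {n} (\<lambda>_ _. False)"
proof -
  have "p = [n]" if "is_tpath {n} (\<lambda>_ _. False) p n n" for p
  proof -
    from that have "distinct p" "set p = {n}"
      unfolding is_tpath_def by (auto simp: subset_singleton_iff)
    moreover from this have "length p = 1" using distinct_card by fastforce
    then obtain z where "p = [z]" by (auto simp: length_Suc_conv)
    ultimately show ?thesis by simp
  qed
  moreover have "is_tpath {n} (\<lambda>_ _. False) [n] n n" by (simp add: is_tpath_def)
  ultimately show ?thesis unfolding is_tree_def is_graph_def by auto
qed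

lemma dag_tree_decomp_singleton: "dag_tree_decomp V D {n} (\<lambda>_ _. False) (\<lambda>_. sources V D)"
  unfolding dag_tree_decomp_def using is_tree_singleton by auto

lemma dag_dtw_attained: "\<exists>N TE bag. dag_tree_decomp V D N TE bag \<and> dtd_width N bag = dag_dtw V D"
  unfolding dag_dtw_def by (rule LeastI_ex) (use dag_tree_decomp_singleton in blast)

lemma dag_dtw_le_width: "dag_tree_decomp V D N TE bag \<Longrightarrow> dag_dtw V D \<le> dtd_width N bag"
  unfolding dag_dtw_def by (rule Least_le) blast

lemma dtd_width_mono:
  assumes "finite N" "\<And>t. t \<in> N \<Longrightarrow> card (bag' t) \<le> card (bag t)"
  shows "dtd_width N bag' \<le> dtd_width N bag"
proof (cases "N = {}")
  case False
  have "card (bag' t) \<le> dtd_width N bag" if "t \<in> N" for t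
    using assms that le_trans unfolding dtd_width_def by fastforce
  with False show ?thesis
    unfolding dtd_width_def using assms(1) by (auto intro!: Max.boundedI)
qed (simp add: dtd_width_def)

definition sources_reaching :: "'a set \<Rightarrow> ('a \<Rightarrow> 'a \<Rightarrow> bool) \<Rightarrow> 'a \<Rightarrow> 'a set" where
  "sources_reaching V D y = {s \<in> sources V D. y \<in> reach D s}"

lemma finite_sources: "finite V \<Longrightarrow> finite (sources V D)"
  unfolding sources_def by simp

lemma dag_tree_decomp_iff_tree_convex:
  "dag_tree_decomp V D N TE bag \<longleftrightarrow> is_tree N TE \<and> (\<forall>t\<in>N. bag t \<subseteq> sources V D) \<and>
     (\<forall>s\<in>sources V D. \<exists>t\<in>N. s \<in> bag t) \<and>
     (\<forall>y. tree_convex N TE {t \<in> N. y \<in> reach_set D (bag t)})"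
  unfolding dag_tree_decomp_def tree_convex_def by blast

lemma mem_reach_set_iff:
  "B \<subseteq> sources V D \<Longrightarrow> y \<in> reach_set D B \<longleftrightarrow> B \<inter> sources_reaching V D y \<noteq> {}"
  unfolding reach_set_def sources_reaching_def by blast

definition sources_reaching_linked :: "'a set \<Rightarrow> ('a \<Rightarrow> 'a \<Rightarrow> bool) \<Rightarrow> 'a set \<Rightarrow> bool" where
  "sources_reaching_linked V D S \<longleftrightarrow> S = {} \<or> (\<exists>y. S = sources_reaching V D y) \<or>
     (\<exists>y1 y2. S = sources_reaching V D y1 \<union> sources_reaching V D y2 \<and>
        sources_reaching V D y1 \<inter> sources_reaching V D y2 \<noteq> {})"

lemma dag_tree_decomp_tree_convex_sources_reaching:
  assumes "dag_tree_decomp V D N TE bag"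
  shows "tree_convex N TE {t \<in> N. bag t \<inter> sources_reaching V D y \<noteq> {}}"
proof -
  have bags: "\<And>t. t \<in> N \<Longrightarrow> bag t \<subseteq> sources V D"
    using assms unfolding dag_tree_decomp_def by blast
  have "{t \<in> N. bag t \<inter> sources_reaching V D y \<noteq> {}} = {t \<in> N. y \<in> reach_set D (bag t)}"
  proof (rule Collect_cong)
    fix t show "(t \<in> N \<and> bag t \<inter> sources_reaching V D y \<noteq> {}) = (t \<in> N \<and> y \<in> reach_set D (bag t))"
      using mem_reach_set_iff[OF bags[of t]] by blast
  qed
  then show ?thesis using assms unfolding dag_tree_decomp_iff_tree_convex by simp
qed

text \<open>The subtrees of two vertices with a common source meet at a node whose bag contains it.\<close>
lemma dag_tree_decomp_tree_convex_linked:
  assumes dec: "dag_tree_decomp V D N TE bag" and "sources_reaching_linked V D S"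
  shows "tree_convex N TE {t \<in> N. bag t \<inter> S \<noteq> {}}"
  using assms(2) unfolding sources_reaching_linked_def
proof (elim disjE exE conjE)
  let ?nodes = "\<lambda>S. {t \<in> N. bag t \<inter> S \<noteq> {}}"
  fix y1 y2
  assume S: "S = sources_reaching V D y1 \<union> sources_reaching V D y2"
    and meet: "sources_reaching V D y1 \<inter> sources_reaching V D y2 \<noteq> {}"
  have "?nodes (sources_reaching V D y1) \<inter> ?nodes (sources_reaching V D y2) \<noteq> {}"
    using meet dec unfolding sources_reaching_def dag_tree_decomp_def by blast
  then have "tree_convex N TE (?nodes (sources_reaching V D y1) \<union> ?nodes (sources_reaching V D y2))"
    using dec unfolding dag_tree_decomp_def
    by (intro tree_convex_Un dag_tree_decomp_tree_convex_sources_reaching[OF dec]) auto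
  moreover have "?nodes S = ?nodes (sources_reaching V D y1) \<union> ?nodes (sources_reaching V D y2)"
    unfolding S by blast
  ultimately show ?thesis by simp
qed (use tree_convex_empty dag_tree_decomp_tree_convex_sources_reaching[OF dec] in simp_all)

text \<open>Mapping every bag by \<open>\<phi>\<close> turns a decomposition of \<open>D\<close> into one of \<open>D'\<close> on the same tree.\<close>
lemma dag_dtw_le_if_sources_correspond:
  fixes V :: "'a set" and D :: "'a \<Rightarrow> 'a \<Rightarrow> bool" and K :: "'a set"
    and D' :: "'b \<Rightarrow> 'b \<Rightarrow> bool" and \<phi> :: "'a \<Rightarrow> 'b"
  assumes "finite V"
    and srcs: "\<phi> ` (sources V D \<inter> K) = sources V' D'"
    and linked: "\<And>x. sources_reaching_linked V D {s \<in> sources V D \<inter> K. x \<in> reach D' (\<phi> s)}"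
  shows "dag_dtw V' D' \<le> dag_dtw V D"
proof -
  obtain N TE bag where dec: "dag_tree_decomp V D N TE bag" and width: "dtd_width N bag = dag_dtw V D"
    using dag_dtw_attained by blast
  have tree: "is_tree N TE" and bags: "\<And>t. t \<in> N \<Longrightarrow> bag t \<subseteq> sources V D"
    and cover: "\<And>s. s \<in> sources V D \<Longrightarrow> \<exists>t\<in>N. s \<in> bag t"
    using dec unfolding dag_tree_decomp_def by blast+
  define bag' where "bag' t = \<phi> ` (bag t \<inter> K)" for t
  have "{t \<in> N. x \<in> reach_set D' (bag' t)} =
      {t \<in> N. bag t \<inter> {s \<in> sources V D \<inter> K. x \<in> reach D' (\<phi> s)} \<noteq> {}}" for x
    using bags unfolding bag'_def reach_set_def by blast
  then have convex': "tree_convex N TE {t \<in> N. x \<in> reach_set D' (bag' t)}" for x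
    using dag_tree_decomp_tree_convex_linked[OF dec linked] by simp
  have bags': "bag' t \<subseteq> sources V' D'" if "t \<in> N" for t
    unfolding bag'_def srcs[symmetric] using bags[OF that] by (intro image_mono) blast
  have cover': "\<exists>t\<in>N. s' \<in> bag' t" if s': "s' \<in> sources V' D'" for s'
  proof -
    obtain s where "s \<in> sources V D" "s \<in> K" "s' = \<phi> s" using s' unfolding srcs[symmetric] by blast
    then show ?thesis using cover unfolding bag'_def by blast
  qed
  have "dag_tree_decomp V' D' N TE bag'"
    unfolding dag_tree_decomp_iff_tree_convex using tree bags' cover' convex' by blast
  moreover have "dtd_width N bag' \<le> dtd_width N bag"
  proof (rule dtd_width_mono)
    show "finite N" using tree unfolding is_tree_def is_graph_def by blast
    fix t assume "t \<in> N"
    have "finite (bag t)"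
      using bags[OF \<open>t \<in> N\<close>] \<open>finite V\<close> by (rule finite_subset[OF _ finite_sources])
    then show "card (bag' t) \<le> card (bag t)"
      unfolding bag'_def by (meson card_image_le card_mono inf_le1 le_trans finite_Int)
  qed
  ultimately show ?thesis using dag_dtw_le_width width by fastforce
qed

section \<open>Acyclic orientations\<close>

lemma acyclic_orientationD:
  assumes "acyclic_orientation V E D"
  shows "D x y \<Longrightarrow> E x y" "E x y \<Longrightarrow> D x y \<or> D y x" "\<not> (D x y \<and> D y x)" "\<not> D\<^sup>+\<^sup>+ x x"
  using assms unfolding acyclic_orientation_def by blast+

lemma finite_acyclic_orientations:
  assumes "is_graph V E"
  shows "finite {D. acyclic_orientation V E D}"
proof -
  have "{D. acyclic_orientation V E D} \<subseteq> (\<lambda>R x y. (x, y) \<in> R) ` Pow (V \<times> V)"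
  proof
    fix D assume "D \<in> {D. acyclic_orientation V E D}"
    then have "{(x, y). D x y} \<in> Pow (V \<times> V)"
      using assms unfolding acyclic_orientation_def is_graph_def by blast
    then show "D \<in> (\<lambda>R x y. (x, y) \<in> R) ` Pow (V \<times> V)" by (rule rev_image_eqI) simp
  qed
  moreover have "finite V" using assms unfolding is_graph_def by simp
  ultimately show ?thesis by (meson finite_Pow_iff finite_SigmaI finite_imageI finite_subset)
qed

lemma acyclic_orientation_exists:
  assumes "is_graph V E"
  shows "\<exists>D. acyclic_orientation V E D"
proof -
  have "finite V" using assms unfolding is_graph_def by blast
  then obtain f :: "'a \<Rightarrow> nat" where inj: "inj_on f V"
    using finite_imp_inj_to_nat_seg by metis
  define D where "D x y \<longleftrightarrow> E x y \<and> f x < f y" for x y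
  have increasing: "D\<^sup>+\<^sup>+ x y \<Longrightarrow> f x < f y" for x y
    by (induction rule: tranclp_induct) (auto simp: D_def)
  have "acyclic_orientation V E D"
    unfolding acyclic_orientation_def
  proof (intro conjI allI impI notI)
    fix x y assume "E x y"
    then have "f x \<noteq> f y"
      using assms inj_on_eq_iff[OF inj] unfolding is_graph_def by metis
    with \<open>E x y\<close> show "D x y \<or> D y x"
      using assms unfolding D_def is_graph_def by (metis linorder_neqE_nat)
  next
    fix x y assume "D x y \<and> D y x"
    then show False unfolding D_def by linarith
  next
    fix x assume "D\<^sup>+\<^sup>+ x x"
    then show False using increasing by blast
  qed (simp add: D_def)
  then show ?thesis by blast
qed

lemma finite_dag_dtw_orientations:
  "is_graph V E \<Longrightarrow> finite {dag_dtw V D |D. acyclic_orientation V E D}"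
  using finite_acyclic_orientations[of V E] by (simp add: setcompr_eq_image)

lemma graph_dtw_leI:
  assumes "is_graph V E" "is_graph V' E'"
    and lift: "\<And>D'. acyclic_orientation V' E' D' \<Longrightarrow>
       \<exists>D. acyclic_orientation V E D \<and> dag_dtw V' D' \<le> dag_dtw V D"
  shows "graph_dtw V' E' \<le> graph_dtw V E"
  unfolding graph_dtw_def
proof (rule Max.boundedI)
  show "finite {dag_dtw V' D' |D'. acyclic_orientation V' E' D'}"
    using assms(2) by (rule finite_dag_dtw_orientations)
  show "{dag_dtw V' D' |D'. acyclic_orientation V' E' D'} \<noteq> {}"
    using acyclic_orientation_exists[OF assms(2)] by blast
  fix k assume "k \<in> {dag_dtw V' D' |D'. acyclic_orientation V' E' D'}"
  then obtain D where D: "acyclic_orientation V E D" "k \<le> dag_dtw V D" using lift by blast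
  have "dag_dtw V D \<le> Max {dag_dtw V D |D. acyclic_orientation V E D}"
    using finite_dag_dtw_orientations[OF assms(1)] D(1) by (intro Max_ge) blast+
  with D(2) show "k \<le> Max {dag_dtw V D |D. acyclic_orientation V E D}" by simp
qed

lemma sources_reaching_nonempty:
  assumes "finite V" and edges: "\<And>x y. D x y \<Longrightarrow> x \<in> V \<and> y \<in> V" and "\<And>x. \<not> D\<^sup>+\<^sup>+ x x"
    and "y \<in> V"
  shows "sources_reaching V D y \<noteq> {}"
proof -
  let ?r = "{(x, y). D x y}"
  have "finite ?r" using assms(1) edges by (auto intro: finite_subset[of _ "V \<times> V"])
  moreover have "acyclic ?r" using assms(3) unfolding acyclic_def by (simp add: tranclp_unfold)
  ultimately have "wf ?r" by (rule finite_acyclic_wf)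
  then show ?thesis using \<open>y \<in> V\<close>
  proof (induction y rule: wf_induct_rule)
    case (less y)
    show ?case
    proof (cases "y \<in> sources V D")
      case True
      then show ?thesis unfolding sources_reaching_def reach_def by blast
    next
      case False
      then obtain x where "D x y" using less.prems unfolding sources_def by blast
      with less.IH edges have "sources_reaching V D x \<noteq> {}" by blast
      with \<open>D x y\<close> show ?thesis
        unfolding sources_reaching_def reach_def by (blast intro: rtranclp.rtrancl_into_rtrancl)
    qed
  qed
qed

section \<open>Lifting orientations along deletion, contraction and isomorphism\<close>

locale vertex_deletion =
  fixes V :: "'a set" and E D' :: "'a \<Rightarrow> 'a \<Rightarrow> bool" and v :: 'a
  assumes graph: "is_graph V E"
    and orient: "acyclic_orientation (V - {v}) (snd (delete_vertex (V, E) v)) D'"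
begin

definition sink_extension :: "'a \<Rightarrow> 'a \<Rightarrow> bool" where
  "sink_extension x y \<longleftrightarrow> D' x y \<or> (y = v \<and> E x v)"

lemma D'_edge: "D' x y \<Longrightarrow> E x y \<and> x \<noteq> v \<and> y \<noteq> v"
  using acyclic_orientationD(1)[OF orient] unfolding delete_vertex_def by simp

lemma sink_extension_not_from_sink: "\<not> sink_extension v y"
  using graph D'_edge unfolding sink_extension_def is_graph_def by blast

lemma rtranclp_sink_extension_avoiding_sink:
  "sink_extension\<^sup>*\<^sup>* s x \<Longrightarrow> x \<noteq> v \<Longrightarrow> D'\<^sup>*\<^sup>* s x"
proof (induction rule: rtranclp_induct)
  case (step y z)
  then have "y \<noteq> v" using sink_extension_not_from_sink by blast
  with step show ?case unfolding sink_extension_def by (simp add: rtranclp.rtrancl_into_rtrancl)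
qed simp

lemma acyclic_orientation_sink_extension: "acyclic_orientation V E sink_extension"
  unfolding acyclic_orientation_def
proof (intro conjI allI impI notI)
  fix x y assume "sink_extension x y"
  then show "E x y"
    using D'_edge unfolding sink_extension_def by blast
next
  fix x y assume "E x y"
  then have "E y x" using graph unfolding is_graph_def by blast
  show "sink_extension x y \<or> sink_extension y x"
  proof (cases "x = v \<or> y = v")
    case True
    then show ?thesis using \<open>E x y\<close> \<open>E y x\<close> unfolding sink_extension_def by blast
  next
    case False
    then show ?thesis
      using \<open>E x y\<close> acyclic_orientationD(2)[OF orient]
      unfolding sink_extension_def delete_vertex_def by auto
  qed
next
  fix x y assume "sink_extension x y \<and> sink_extension y x"
  then show False
    using acyclic_orientationD(3)[OF orient] sink_extension_not_from_sink
    unfolding sink_extension_def by blast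
next
  fix x assume "sink_extension\<^sup>+\<^sup>+ x x"
  then obtain y where "sink_extension x y" "sink_extension\<^sup>*\<^sup>* y x"
    by (meson tranclpD)
  moreover have "x \<noteq> v" using sink_extension_not_from_sink \<open>sink_extension x y\<close> by blast
  moreover have "y \<noteq> v"
    using calculation sink_extension_not_from_sink by (metis converse_rtranclpE)
  ultimately have "D' x y" "D'\<^sup>*\<^sup>* y x"
    using rtranclp_sink_extension_avoiding_sink unfolding sink_extension_def by blast+
  then show False using acyclic_orientationD(4)[OF orient] by (meson rtranclp_into_tranclp2)
qed

lemma dag_dtw_le_sink_extension: "dag_dtw (V - {v}) D' \<le> dag_dtw V sink_extension"
proof (rule dag_dtw_le_if_sources_correspond[where \<phi> = id and K = "- {v}"])
  show "finite V" using graph unfolding is_graph_def by blast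
  show "id ` (sources V sink_extension \<inter> - {v}) = sources (V - {v}) D'"
    unfolding sources_def sink_extension_def by auto
  fix x
  let ?P = "{s \<in> sources V sink_extension \<inter> - {v}. x \<in> reach D' (id s)}"
  show "sources_reaching_linked V sink_extension ?P"
  proof (cases "x = v")
    case True
    have "D'\<^sup>*\<^sup>* s v \<Longrightarrow> s = v" for s
      using D'_edge by (metis rtranclp.cases)
    then have "?P = {}" using True unfolding reach_def by auto
    then show ?thesis unfolding sources_reaching_linked_def by blast
  next
    case False
    have "D'\<^sup>*\<^sup>* s x \<Longrightarrow> sink_extension\<^sup>*\<^sup>* s x" for s
      by (rule rtranclp_mono[THEN predicate2D, rotated]) (auto simp: sink_extension_def)
    moreover have "\<not> sink_extension\<^sup>*\<^sup>* v x"
      using False sink_extension_not_from_sink by (metis converse_rtranclpE)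
    ultimately have "?P = sources_reaching V sink_extension x"
      using False rtranclp_sink_extension_avoiding_sink
      unfolding sources_reaching_def reach_def by auto
    then show ?thesis unfolding sources_reaching_linked_def by blast
  qed
qed

end

text \<open>The edge \<open>uv\<close> is oriented from \<open>f\<close> to \<open>g\<close>; the assumption \<open>in_nbr\<close> makes \<open>f\<close> a source
  of the lifted orientation exactly when the merged vertex \<open>u\<close> is a source of \<open>D'\<close>.\<close>
locale edge_uncontraction =
  fixes V :: "'a set" and E D' :: "'a \<Rightarrow> 'a \<Rightarrow> bool" and u v f g :: 'a
  assumes graph: "is_graph V E" and edge: "E u v"
    and orient: "acyclic_orientation (V - {v}) (snd (contract_edge (V, E) u v)) D'"
    and ends: "(f = u \<and> g = v) \<or> (f = v \<and> g = u)"
    and in_nbr: "\<And>a. D' a u \<Longrightarrow> \<exists>a'. E a' f \<and> D' a' u"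
begin

definition merge :: "'a \<Rightarrow> 'a" where
  "merge x = (if x = v then u else x)"

definition uncontract :: "'a \<Rightarrow> 'a \<Rightarrow> bool" where
  "uncontract x y \<longleftrightarrow> E x y \<and> (D' (merge x) (merge y) \<or> (x = f \<and> y = g))"

lemma E_edge: "E x y \<Longrightarrow> E y x \<and> x \<noteq> y \<and> x \<in> V \<and> y \<in> V"
  using graph unfolding is_graph_def by blast

lemma D'_edge:
  "D' x y \<Longrightarrow> x \<noteq> v \<and> y \<noteq> v \<and> x \<noteq> y \<and> (E x y \<or> (x = u \<and> E v y) \<or> (y = u \<and> E v x))"
  using acyclic_orientationD(1)[OF orient] unfolding contract_edge_def by simp

lemma ends_distinct: "u \<noteq> v" "f \<noteq> g"
  using ends E_edge[OF edge] by auto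

lemma merge_ends: "merge f = u" "merge g = u"
  using ends unfolding merge_def by auto

lemma merge_eq_u: "merge x = u \<longleftrightarrow> x = f \<or> x = g"
  using ends unfolding merge_def by auto

lemma merge_other: "x \<noteq> v \<Longrightarrow> merge x = x"
  unfolding merge_def by simp

lemma uncontract_ends: "uncontract f g"
  using edge ends E_edge unfolding uncontract_def by blast

lemma uncontract_step_from_other:
  assumes "D' x z" "x \<noteq> u"
  shows "\<exists>z'. merge z' = z \<and> uncontract x z'"
proof -
  have "x \<noteq> v" "z \<noteq> v" "E x z \<or> (z = u \<and> E v x)" using D'_edge[OF assms(1)] assms(2) by auto
  then show ?thesis
    using assms E_edge unfolding uncontract_def merge_def by (metis (full_types))
qed

lemma uncontract_step_from_merged:
  assumes "D' u z"
  shows "uncontract u z \<or> uncontract v z"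
proof -
  have "z \<noteq> v" "z \<noteq> u" "E u z \<or> E v z" using D'_edge[OF assms] by auto
  then show ?thesis using assms edge E_edge unfolding uncontract_def merge_def by auto
qed

lemma uncontract_merge: "uncontract x y \<Longrightarrow> D' (merge x) (merge y) \<or> merge x = merge y"
  unfolding uncontract_def using merge_ends by auto

lemma rtranclp_uncontract_merge: "uncontract\<^sup>*\<^sup>* a b \<Longrightarrow> D'\<^sup>*\<^sup>* (merge a) (merge b)"
proof (induction rule: rtranclp_induct)
  case (step y z)
  then show ?case using uncontract_merge[OF step(2)] by (metis rtranclp.rtrancl_into_rtrancl)
qed simp

lemma tranclp_uncontract_merge:
  "uncontract\<^sup>+\<^sup>+ x y \<Longrightarrow> D'\<^sup>+\<^sup>+ (merge x) (merge y) \<or> (x = f \<and> y = g)"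
proof (induction rule: tranclp_induct)
  case (base y)
  then show ?case unfolding uncontract_def by auto
next
  case (step y z)
  from step(3) show ?case
  proof
    assume "D'\<^sup>+\<^sup>+ (merge x) (merge y)"
    then show ?thesis using uncontract_merge[OF step(2)] by (metis tranclp.trancl_into_trancl)
  next
    assume "x = f \<and> y = g"
    with ends_distinct(2) have "D' u (merge z)" using step(2) merge_ends unfolding uncontract_def by auto
    then show ?thesis using \<open>x = f \<and> y = g\<close> merge_ends by auto
  qed
qed

lemma contract_edge_merge:
  assumes "E x y" "\<not> ((x = u \<and> y = v) \<or> (x = v \<and> y = u))"
  shows "snd (contract_edge (V, E) u v) (merge x) (merge y)"
  using assms E_edge[OF assms(1)] ends_distinct(1) unfolding contract_edge_def merge_def by auto

lemma acyclic_orientation_uncontract: "acyclic_orientation V E uncontract"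
  unfolding acyclic_orientation_def
proof (intro conjI allI impI notI)
  fix x y assume "uncontract x y"
  then show "E x y" unfolding uncontract_def by blast
next
  fix x y assume "E x y"
  show "uncontract x y \<or> uncontract y x"
  proof (cases "(x = u \<and> y = v) \<or> (x = v \<and> y = u)")
    case True
    then show ?thesis using uncontract_ends ends by auto
  next
    case False
    then have "D' (merge x) (merge y) \<or> D' (merge y) (merge x)"
      using contract_edge_merge[OF \<open>E x y\<close>] acyclic_orientationD(2)[OF orient] by blast
    then show ?thesis using \<open>E x y\<close> E_edge unfolding uncontract_def by blast
  qed
next
  fix x y assume "uncontract x y \<and> uncontract y x"
  moreover have "\<not> D' u u" using D'_edge by blast
  ultimately show False
    using acyclic_orientationD(3)[OF orient] merge_ends ends_distinct(2)
    unfolding uncontract_def by metis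
next
  fix x assume "uncontract\<^sup>+\<^sup>+ x x"
  then show False using ends_distinct(2) tranclp_uncontract_merge acyclic_orientationD(4)[OF orient] by blast
qed

text \<open>A path through the merged vertex lifts, unless it would have to enter at \<open>g\<close> and leave
  from \<open>f\<close>; then it splits into a path to \<open>g\<close> and a path from \<open>f\<close>.\<close>
lemma rtranclp_merge_lift:
  "D'\<^sup>*\<^sup>* (merge a) x \<Longrightarrow>
     \<exists>x'. merge x' = x \<and> (uncontract\<^sup>*\<^sup>* a x' \<or> (uncontract\<^sup>*\<^sup>* a g \<and> uncontract\<^sup>*\<^sup>* f x'))"
proof (induction rule: rtranclp_induct)
  case (step x z)
  then obtain x' where x': "merge x' = x"
    "uncontract\<^sup>*\<^sup>* a x' \<or> (uncontract\<^sup>*\<^sup>* a g \<and> uncontract\<^sup>*\<^sup>* f x')" by blast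
  show ?case
  proof (cases "x = u")
    case True
    have "uncontract\<^sup>*\<^sup>* f u" "uncontract\<^sup>*\<^sup>* f v"
      using uncontract_ends ends by auto
    then have "uncontract\<^sup>*\<^sup>* f z"
      using uncontract_step_from_merged step(2) True by (meson rtranclp.rtrancl_into_rtrancl)
    moreover have "uncontract\<^sup>*\<^sup>* a g"
      using x' True merge_eq_u uncontract_ends by (metis rtranclp.rtrancl_into_rtrancl)
    ultimately show ?thesis
      using step(2) True D'_edge merge_other by metis
  next
    case False
    with x' have "x' = x" using merge_other merge_def by metis
    obtain z' where z': "merge z' = z" "uncontract x z'"
      using uncontract_step_from_other step(2) False by blast
    have "uncontract\<^sup>*\<^sup>* a z' \<or> (uncontract\<^sup>*\<^sup>* a g \<and> uncontract\<^sup>*\<^sup>* f z')"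
      using x'(2) z'(2) unfolding \<open>x' = x\<close> by (auto intro: rtranclp.rtrancl_into_rtrancl)
    with z'(1) show ?thesis by blast
  qed
qed blast

lemma reach_merged_iff: "D'\<^sup>*\<^sup>* (merge s) u \<longleftrightarrow> uncontract\<^sup>*\<^sup>* s g"
proof
  assume "D'\<^sup>*\<^sup>* (merge s) u"
  then obtain x' where "x' = f \<or> x' = g"
    "uncontract\<^sup>*\<^sup>* s x' \<or> (uncontract\<^sup>*\<^sup>* s g \<and> uncontract\<^sup>*\<^sup>* f x')"
    using rtranclp_merge_lift merge_eq_u by blast
  then show "uncontract\<^sup>*\<^sup>* s g"
    using uncontract_ends by (metis rtranclp.rtrancl_into_rtrancl)
next
  assume "uncontract\<^sup>*\<^sup>* s g"
  then show "D'\<^sup>*\<^sup>* (merge s) u" using rtranclp_uncontract_merge merge_ends by metis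
qed

lemma reach_other_iff:
  assumes "x \<noteq> u" "x \<noteq> v"
  shows "D'\<^sup>*\<^sup>* (merge s) x \<longleftrightarrow>
    uncontract\<^sup>*\<^sup>* s x \<or> (uncontract\<^sup>*\<^sup>* s g \<and> uncontract\<^sup>*\<^sup>* f x)"
proof
  assume "D'\<^sup>*\<^sup>* (merge s) x"
  then show "uncontract\<^sup>*\<^sup>* s x \<or> (uncontract\<^sup>*\<^sup>* s g \<and> uncontract\<^sup>*\<^sup>* f x)"
    using rtranclp_merge_lift assms merge_def by metis
next
  have "merge x = x" using assms(2) by (rule merge_other)
  moreover assume "uncontract\<^sup>*\<^sup>* s x \<or> (uncontract\<^sup>*\<^sup>* s g \<and> uncontract\<^sup>*\<^sup>* f x)"
  ultimately show "D'\<^sup>*\<^sup>* (merge s) x"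
    using rtranclp_uncontract_merge merge_ends by (metis rtranclp_trans)
qed

lemma merge_source:
  assumes s: "s \<in> sources V uncontract"
  shows "merge s \<in> sources (V - {v}) D'"
proof -
  have "s \<in> V" and no_pred: "\<And>a. \<not> uncontract a s" using s unfolding sources_def by auto
  have "u \<in> V" using E_edge[OF edge] by blast
  show ?thesis
  proof (cases "s = f")
    case True
    have "\<not> D' a u" for a
    proof
      assume "D' a u"
      then obtain a' where "E a' f" "D' a' u" using in_nbr by blast
      then have "uncontract a' f"
        using D'_edge merge_ends merge_other unfolding uncontract_def by metis
      with no_pred True show False by blast
    qed
    then show ?thesis using True merge_ends \<open>u \<in> V\<close> ends_distinct unfolding sources_def by auto
  next
    case False
    moreover have "s \<noteq> g" using no_pred uncontract_ends by blast
    ultimately have "s \<noteq> u" "s \<noteq> v" using ends by auto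
    have "\<not> D' a s" for a
    proof
      assume "D' a s"
      show False
      proof (cases "a = u")
        case True
        then show False
          using uncontract_step_from_merged \<open>D' a s\<close> no_pred by blast
      next
        case False
        then obtain z' where "merge z' = s" "uncontract a z'"
          using uncontract_step_from_other \<open>D' a s\<close> by blast
        then show False using no_pred \<open>s \<noteq> u\<close> merge_def by metis
      qed
    qed
    then show ?thesis using \<open>s \<in> V\<close> \<open>s \<noteq> v\<close> merge_other unfolding sources_def by auto
  qed
qed

lemma merge_sources: "merge ` sources V uncontract = sources (V - {v}) D'"
proof (intro equalityI subsetI)
  fix s' assume s': "s' \<in> sources (V - {v}) D'"
  then have "s' \<in> V" "s' \<noteq> v" and no_pred: "\<And>a. \<not> D' a s'" unfolding sources_def by auto
  show "s' \<in> merge ` sources V uncontract"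
  proof (cases "s' = u")
    case True
    have "f \<in> V" using ends E_edge[OF edge] by blast
    then have "f \<in> sources V uncontract"
      using no_pred True merge_ends ends_distinct unfolding sources_def uncontract_def by auto
    then show ?thesis using True merge_ends(1) by (metis image_eqI)
  next
    case False
    then have "s' \<in> sources V uncontract"
      using no_pred \<open>s' \<in> V\<close> \<open>s' \<noteq> v\<close> ends merge_other unfolding sources_def uncontract_def by auto
    then show ?thesis using merge_other[OF \<open>s' \<noteq> v\<close>] by force
  qed
qed (use merge_source in blast)

lemma not_reach_deleted: "\<not> D'\<^sup>*\<^sup>* (merge s) v"
proof -
  have "D'\<^sup>*\<^sup>* p v \<Longrightarrow> p = v" for p
    using D'_edge by (metis rtranclp.cases)
  moreover have "merge s \<noteq> v"
    using ends_distinct(1) unfolding merge_def by simp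
  ultimately show ?thesis by blast
qed

lemma sources_reaching_uncontract_nonempty:
  assumes "y \<in> V"
  shows "sources_reaching V uncontract y \<noteq> {}"
proof (rule sources_reaching_nonempty[OF _ _ _ assms])
  show "finite V" using graph unfolding is_graph_def by blast
  show "uncontract a b \<Longrightarrow> a \<in> V \<and> b \<in> V" for a b
    using E_edge unfolding uncontract_def by blast
  show "\<not> uncontract\<^sup>+\<^sup>+ a a" for a
    using acyclic_orientationD(4)[OF acyclic_orientation_uncontract] .
qed

lemma dag_dtw_le_uncontract: "dag_dtw (V - {v}) D' \<le> dag_dtw V uncontract"
proof (rule dag_dtw_le_if_sources_correspond[where \<phi> = merge and K = UNIV])
  show "finite V" using graph unfolding is_graph_def by blast
  show "merge ` (sources V uncontract \<inter> UNIV) = sources (V - {v}) D'"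
    using merge_sources by simp
  fix x
  let ?P = "{s \<in> sources V uncontract \<inter> UNIV. x \<in> reach D' (merge s)}"
  let ?R = "sources_reaching V uncontract"
  have P_eq: "?P = {s \<in> sources V uncontract. D'\<^sup>*\<^sup>* (merge s) x}"
    unfolding reach_def by simp
  consider "x = v" | "x = u" | "x \<noteq> u" "x \<noteq> v" "uncontract\<^sup>*\<^sup>* f x"
    | "x \<noteq> u" "x \<noteq> v" "\<not> uncontract\<^sup>*\<^sup>* f x"
    by blast
  then show "sources_reaching_linked V uncontract ?P"
  proof cases
    case 1
    then have "?P = {}" using P_eq not_reach_deleted by simp
    then show ?thesis unfolding sources_reaching_linked_def by blast
  next
    case 2
    then have "?P = ?R g"
      unfolding P_eq 2 sources_reaching_def reach_def by (simp add: reach_merged_iff)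
    then show ?thesis unfolding sources_reaching_linked_def by blast
  next
    case 3
    then have "?P = ?R x \<union> ?R g"
      unfolding P_eq sources_reaching_def reach_def using reach_other_iff[OF 3(1,2)] by auto
    moreover have "?R f \<noteq> {}"
      using ends E_edge[OF edge] by (intro sources_reaching_uncontract_nonempty) auto
    then have "?R x \<inter> ?R g \<noteq> {}"
      using 3(3) uncontract_ends unfolding sources_reaching_def reach_def
      by (blast intro: rtranclp_trans rtranclp.rtrancl_into_rtrancl)
    ultimately show ?thesis unfolding sources_reaching_linked_def by blast
  next
    case 4
    then have "?P = ?R x"
      unfolding P_eq sources_reaching_def reach_def using reach_other_iff[OF 4(1,2)] by auto
    then show ?thesis unfolding sources_reaching_linked_def by blast
  qed
qed

end

locale orientation_transport =
  fixes VI :: "'b set" and EI DI :: "'b \<Rightarrow> 'b \<Rightarrow> bool"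
    and V :: "'a set" and E :: "'a \<Rightarrow> 'a \<Rightarrow> bool" and h :: "'b \<Rightarrow> 'a"
  assumes graphI: "is_graph VI EI" and graph: "is_graph V E" and bij: "bij_betw h VI V"
    and edges: "\<And>x y. x \<in> VI \<Longrightarrow> y \<in> VI \<Longrightarrow> EI x y \<longleftrightarrow> E (h x) (h y)"
    and orient: "acyclic_orientation VI EI DI"
begin

abbreviation h' :: "'a \<Rightarrow> 'b" where
  "h' \<equiv> inv_into VI h"

definition transport :: "'a \<Rightarrow> 'a \<Rightarrow> bool" where
  "transport x y \<longleftrightarrow> x \<in> V \<and> y \<in> V \<and> DI (h' x) (h' y)"

lemma h'_h: "a \<in> VI \<Longrightarrow> h' (h a) = a \<and> h a \<in> V"
  using bij by (meson bij_betw_apply bij_betw_inv_into_left)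

lemma h_h': "x \<in> V \<Longrightarrow> h (h' x) = x \<and> h' x \<in> VI"
  using bij by (meson bij_betw_apply bij_betw_inv_into bij_betw_inv_into_right)

lemma DI_edge: "DI a b \<Longrightarrow> a \<in> VI \<and> b \<in> VI"
  using graphI acyclic_orientationD(1)[OF orient] unfolding is_graph_def by blast

lemma E_iff_EI: "x \<in> V \<Longrightarrow> y \<in> V \<Longrightarrow> E x y \<longleftrightarrow> EI (h' x) (h' y)"
  using edges h_h' by metis

lemma tranclp_transport: "transport\<^sup>+\<^sup>+ x y \<Longrightarrow> DI\<^sup>+\<^sup>+ (h' x) (h' y)"
proof (induction rule: tranclp_induct)
  case (step y z)
  then show ?case unfolding transport_def by (meson tranclp.trancl_into_trancl)
qed (auto simp: transport_def)

lemma acyclic_orientation_transport: "acyclic_orientation V E transport"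
  unfolding acyclic_orientation_def
proof (intro conjI allI impI notI)
  fix x y assume "transport x y"
  then show "E x y"
    using E_iff_EI acyclic_orientationD(1)[OF orient] unfolding transport_def by blast
next
  fix x y assume "E x y"
  moreover from this have "x \<in> V" "y \<in> V" using graph unfolding is_graph_def by auto
  ultimately show "transport x y \<or> transport y x"
    using E_iff_EI acyclic_orientationD(2)[OF orient] unfolding transport_def by blast
next
  fix x y assume "transport x y \<and> transport y x"
  then show False using acyclic_orientationD(3)[OF orient] unfolding transport_def by blast
next
  fix x assume "transport\<^sup>+\<^sup>+ x x"
  then show False using tranclp_transport acyclic_orientationD(4)[OF orient] by blast
qed

lemma reach_transport_iff:
  assumes "s \<in> V" "x \<in> VI"
  shows "DI\<^sup>*\<^sup>* (h' s) x \<longleftrightarrow> transport\<^sup>*\<^sup>* s (h x)"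
proof
  have "DI\<^sup>*\<^sup>* a b \<Longrightarrow> a \<in> VI \<Longrightarrow> transport\<^sup>*\<^sup>* (h a) (h b)" for a b
  proof (induction rule: rtranclp_induct)
    case (step y z)
    then have "transport (h y) (h z)" using DI_edge h'_h unfolding transport_def by auto
    with step show ?case by (meson rtranclp.rtrancl_into_rtrancl)
  qed simp
  moreover assume "DI\<^sup>*\<^sup>* (h' s) x"
  ultimately show "transport\<^sup>*\<^sup>* s (h x)" using h_h'[OF assms(1)] by metis
next
  have "transport\<^sup>*\<^sup>* a b \<Longrightarrow> DI\<^sup>*\<^sup>* (h' a) (h' b)" for a b
  proof (induction rule: rtranclp_induct)
    case (step y z)
    then show ?case unfolding transport_def by (meson rtranclp.rtrancl_into_rtrancl)
  qed simp
  moreover assume "transport\<^sup>*\<^sup>* s (h x)"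
  ultimately show "DI\<^sup>*\<^sup>* (h' s) x" using h'_h[OF assms(2)] by metis
qed

lemma transport_sources: "h' ` sources V transport = sources VI DI"
proof (intro equalityI subsetI)
  fix a assume "a \<in> h' ` sources V transport"
  then obtain s where s: "s \<in> V" "\<And>x. \<not> transport x s" "a = h' s"
    unfolding sources_def by blast
  have "\<not> DI b a" for b
    using s h'_h[of b] h_h'[OF s(1)] DI_edge unfolding transport_def by metis
  then show "a \<in> sources VI DI" using s h_h' unfolding sources_def by blast
next
  fix a assume a: "a \<in> sources VI DI"
  then have "h a \<in> sources V transport"
    using h'_h unfolding sources_def transport_def by auto
  then show "a \<in> h' ` sources V transport" using a h'_h unfolding sources_def by force
qed

lemma dag_dtw_le_transport: "dag_dtw VI DI \<le> dag_dtw V transport"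
proof (rule dag_dtw_le_if_sources_correspond[where \<phi> = h' and K = UNIV])
  show "finite V" using graph unfolding is_graph_def by blast
  show "h' ` (sources V transport \<inter> UNIV) = sources VI DI"
    using transport_sources by simp
  fix x
  let ?P = "{s \<in> sources V transport \<inter> UNIV. x \<in> reach DI (h' s)}"
  show "sources_reaching_linked V transport ?P"
  proof (cases "x \<in> VI")
    case True
    then have "?P = sources_reaching V transport (h x)"
      using reach_transport_iff unfolding sources_reaching_def reach_def sources_def by auto
    then show ?thesis unfolding sources_reaching_linked_def by blast
  next
    case False
    have "DI\<^sup>*\<^sup>* a b \<Longrightarrow> a \<in> VI \<Longrightarrow> b \<in> VI" for a b
      by (induction rule: rtranclp_induct) (auto dest: DI_edge)
    then have "?P = {}"
      using False h_h' unfolding reach_def sources_def by blast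
    then show ?thesis unfolding sources_reaching_linked_def by blast
  qed
qed

end

section \<open>Induced minors\<close>

lemma is_graph_delete_vertex:
  "is_graph V E \<Longrightarrow> is_graph (fst (delete_vertex (V, E) v)) (snd (delete_vertex (V, E) v))"
  unfolding is_graph_def delete_vertex_def by auto

lemma graph_dtw_delete_vertex_le:
  assumes "is_graph V E"
  shows "graph_dtw (fst (delete_vertex (V, E) v)) (snd (delete_vertex (V, E) v)) \<le> graph_dtw V E"
proof (rule graph_dtw_leI[OF assms is_graph_delete_vertex[OF assms]])
  fix D' assume "acyclic_orientation (fst (delete_vertex (V, E) v)) (snd (delete_vertex (V, E) v)) D'"
  then interpret vertex_deletion V E D' v
    using assms by unfold_locales (simp_all add: delete_vertex_def)
  show "\<exists>D. acyclic_orientation V E D \<and>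
      dag_dtw (fst (delete_vertex (V, E) v)) D' \<le> dag_dtw V D"
    using acyclic_orientation_sink_extension dag_dtw_le_sink_extension
    by (auto simp: delete_vertex_def)
qed

lemma is_graph_contract_edge:
  "is_graph V E \<Longrightarrow> E u v \<Longrightarrow> is_graph (fst (contract_edge (V, E) u v)) (snd (contract_edge (V, E) u v))"
  unfolding is_graph_def contract_edge_def by auto

lemma graph_dtw_contract_edge_le:
  assumes graph: "is_graph V E" and edge: "E u v"
  shows "graph_dtw (fst (contract_edge (V, E) u v)) (snd (contract_edge (V, E) u v)) \<le> graph_dtw V E"
proof (rule graph_dtw_leI[OF graph is_graph_contract_edge[OF graph edge]])
  fix D' assume "acyclic_orientation (fst (contract_edge (V, E) u v)) (snd (contract_edge (V, E) u v)) D'"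
  then have orient: "acyclic_orientation (V - {v}) (snd (contract_edge (V, E) u v)) D'"
    by (simp add: contract_edge_def)
  obtain f g where "edge_uncontraction V E D' u v f g"
  proof (cases "\<exists>a. D' a u \<and> E a v")
    case True
    have "edge_uncontraction V E D' u v v u"
      by unfold_locales (use True graph edge orient in auto)
    then show ?thesis by (rule that)
  next
    case False
    have "E a u" if "D' a u" for a
      using acyclic_orientationD(1)[OF orient that] False that graph
      unfolding contract_edge_def is_graph_def by auto
    then have "edge_uncontraction V E D' u v u v"
      by unfold_locales (use graph edge orient in auto)
    then show ?thesis by (rule that)
  qed
  then interpret edge_uncontraction V E D' u v f g .
  show "\<exists>D. acyclic_orientation V E D \<and>
      dag_dtw (fst (contract_edge (V, E) u v)) D' \<le> dag_dtw V D"
    using acyclic_orientation_uncontract dag_dtw_le_uncontract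
    by (auto simp: contract_edge_def)
qed

lemma graph_dtw_iso_le:
  assumes "is_graph VI EI" "is_graph V E" "graph_iso VI EI V E"
  shows "graph_dtw VI EI \<le> graph_dtw V E"
proof (rule graph_dtw_leI[OF assms(2,1)])
  obtain h where "bij_betw h VI V" and edges: "\<And>x y. x \<in> VI \<Longrightarrow> y \<in> VI \<Longrightarrow> EI x y \<longleftrightarrow> E (h x) (h y)"
    using assms(3) unfolding graph_iso_def by blast
  fix DI assume "acyclic_orientation VI EI DI"
  then interpret orientation_transport VI EI DI V E h
    using assms \<open>bij_betw h VI V\<close> edges by unfold_locales auto
  show "\<exists>D. acyclic_orientation V E D \<and> dag_dtw VI DI \<le> dag_dtw V D"
    using acyclic_orientation_transport dag_dtw_le_transport by blast
qed

lemma obtainable_graph_dtw_le: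
  assumes "obtainable H G" "is_graph (fst H) (snd H)"
  shows "is_graph (fst G) (snd G) \<and> graph_dtw (fst G) (snd G) \<le> graph_dtw (fst H) (snd H)"
  using assms
proof (induction rule: obtainable.induct)
  case (obt_delete G v)
  obtain V E where "G = (V, E)" by fastforce
  with obt_delete show ?case
    using is_graph_delete_vertex[of V E v] graph_dtw_delete_vertex_le[of V E v] by auto
next
  case (obt_contract G u v)
  obtain V E where "G = (V, E)" by fastforce
  with obt_contract show ?case
    using is_graph_contract_edge[of V E u v] graph_dtw_contract_edge_le[of V E u v] by auto
qed simp

theorem mainTheorem16:
  fixes VH :: "'a set" and EH :: "'a \<Rightarrow> 'a \<Rightarrow> bool"
    and VI :: "'b set" and EI :: "'b \<Rightarrow> 'b \<Rightarrow> bool"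
  assumes "is_graph VH EH" and "is_graph VI EI"
    and "induced_minor VI EI VH EH"
  shows "graph_dtw VI EI \<le> graph_dtw VH EH"
proof -
  obtain G where "obtainable (VH, EH) G" "graph_iso VI EI (fst G) (snd G)"
    using assms(3) unfolding induced_minor_def by blast
  with assms(1) have "is_graph (fst G) (snd G)" "graph_dtw (fst G) (snd G) \<le> graph_dtw VH EH"
    using obtainable_graph_dtw_le[of "(VH, EH)" G] by simp_all
  then show ?thesis
    using graph_dtw_iso_le[OF assms(2)] \<open>graph_iso VI EI (fst G) (snd G)\<close> le_trans by blast
qed

end
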